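(* Let $p<c\le\overline{c}$. There exists a positive constant $\overline{K}$ such that $$-\frac{c-p}{q}\le J^p_x-J^c_x\le\overline{K}\left[1+\frac1x+\frac{e^{-\frac{1}{1-\alpha}}}{\left(xq(1-\alpha)\right)^{1/(1-\alpha)}}+\frac{x}{(c-p)^{1-\alpha}}\right](c-p)$$ for any $0<\alpha<1$ and $x>0$.
   Context: Cramér–Lundberg model: the uncontrolled surplus is $X_t=x+pt-\sum_{i=1}^{N_t}U_i$, where $x\ge0$ is the initial surplus, $p>0$ the premium rate, $N_t$ a Poisson process with intensity $\beta>0$, and the claims $U_i$ are i.i.d. positive random variables, independent of $N$, with continuous distribution function $F$; $p>\beta\mathbb{E}[U_1]$. Standing assumption (A1): $F$ is globally Lipschitz, $0\le F(y)-F(x)\le K(y-x)$ for $x<y$. Fix $\overline{c}>p$ and a discount rate $q>0$. For a dividend rate process $C$ the controlled surplus is $X^C_t=X_t-\int_0^tC_sds$ with $X_0=x$, the ruin time is $\tau=\inf\{t\ge0:X^C_t<0\}$ and $J(x;C)=\mathbb{E}[\int_0^\tau e^{-qs}C_sds]$. For $y\ge0$ and $c\in[0,\overline{c}]$, $J^c_y$ denotes the value $J(y;C)$ of the strategy $C_t\equiv c$ that pays dividends at the constant rate $c$ until ruin, starting from surplus $y$. *)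

theory Defs
  imports "HOL-Probability.Probability"
begin

text \<open>The Poisson process N with intensity beta is realised
through its i.i.d. exponential(beta) inter-arrival times E 0, E 1, ...;
the n-th arrival time is E 0 + ... + E (n-1), and U i is the size of the (i+1)-th claim.\<close>

definition claim_count :: "(nat \<Rightarrow> 'a \<Rightarrow> real) \<Rightarrow> real \<Rightarrow> 'a \<Rightarrow> nat" where
  "claim_count E t \<omega> = card {n::nat. 1 \<le> n \<and> (\<Sum>i<n. E i \<omega>) \<le> t}"

definition surplus ::
  "real \<Rightarrow> (nat \<Rightarrow> 'a \<Rightarrow> real) \<Rightarrow> (nat \<Rightarrow> 'a \<Rightarrow> real) \<Rightarrow> real \<Rightarrow> real \<Rightarrow> 'a \<Rightarrow> real \<Rightarrow> real" where
  "surplus p E U y c \<omega> t = y + p * t - (\<Sum>i<claim_count E t \<omega>. U i \<omega>) - c * t"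

text \<open>Ruin time (infimum over the empty set is +infinity).\<close>
definition ruin_time ::
  "real \<Rightarrow> (nat \<Rightarrow> 'a \<Rightarrow> real) \<Rightarrow> (nat \<Rightarrow> 'a \<Rightarrow> real) \<Rightarrow> real \<Rightarrow> real \<Rightarrow> 'a \<Rightarrow> ereal" where
  "ruin_time p E U y c \<omega> = Inf {ereal t | t. 0 \<le> t \<and> surplus p E U y c \<omega> t < 0}"

definition J_const ::
  "'a measure \<Rightarrow> real \<Rightarrow> real \<Rightarrow> (nat \<Rightarrow> 'a \<Rightarrow> real) \<Rightarrow> (nat \<Rightarrow> 'a \<Rightarrow> real) \<Rightarrow> real \<Rightarrow> real \<Rightarrow> real" where
  "J_const M p q E U c y = enn2real (\<integral>\<^sup>+ \<omega>. (\<integral>\<^sup>+ s. ennreal (exp (- q * s) * c) *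
      indicator {t. 0 \<le> t \<and> ereal t < ruin_time p E U y c \<omega>} s \<partial>lborel) \<partial>M)"

definition cl_model ::
  "'a measure \<Rightarrow> real \<Rightarrow> real \<Rightarrow> (real \<Rightarrow> real) \<Rightarrow> (nat \<Rightarrow> 'a \<Rightarrow> real) \<Rightarrow> (nat \<Rightarrow> 'a \<Rightarrow> real) \<Rightarrow> bool" where
  "cl_model M p \<beta> F E U \<longleftrightarrow>
     prob_space M \<and> 0 < p \<and> 0 < \<beta> \<and>
     prob_space.indep_vars M (\<lambda>_. borel) (\<lambda>k. case k of Inl i \<Rightarrow> E i | Inr i \<Rightarrow> U i) (UNIV :: (nat + nat) set) \<and>
     (\<forall>i. distributed M lborel (E i) (\<lambda>x. ennreal (exponential_density \<beta> x))) \<and>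
     (\<forall>i y. measure M {\<omega> \<in> space M. U i \<omega> \<le> y} = F y) \<and>
     (\<forall>i. AE \<omega> in M. 0 < U i \<omega>) \<and>
     continuous_on UNIV F \<and>
     ennreal \<beta> * (\<integral>\<^sup>+ \<omega>. ennreal (U 0 \<omega>) \<partial>M) < ennreal p"

end

theory Submission
  imports Defs
begin

text \<open>
  Both strategies face the same claims and the surplus at rate c never exceeds the one at rate p,
  so \<open>\<tau>\<^sub>c \<le> \<tau>\<^sub>p\<close>. Up to \<open>\<tau>\<^sub>c\<close> the c-strategy pays c - p more per unit time, whence
  \<open>J\<^sup>c - J\<^sup>p \<le> (c - p)/q\<close>. Conversely \<open>J\<^sup>p - J\<^sup>c \<le> (p/q) E[exp (- q \<tau>\<^sub>c); \<tau>\<^sub>c < \<tau>\<^sub>p]\<close>.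
  At a time t just after \<open>\<tau>\<^sub>c\<close> at which the p-surplus is still nonnegative, let m be the number
  of claims so far, \<open>T\<^sub>m\<close> the arrival time of the last one and \<open>S\<^sub>m\<close> their total size; then \<open>T\<^sub>m \<le> t\<close> and
  \<open>0 \<le> x - S\<^sub>m < (c - p) t\<close>, so \<open>exp (- q t) \<le> exp (- q T\<^sub>m / 2) exp (- q (x - S\<^sub>m) / (2 (c - p)))\<close>.
  Sum this over m. The term m = 0 is at most \<open>2 (c - p) / (q x)\<close>; for m > 0 independence factors
  the expectation into the Laplace transform \<open>(\<beta> / (\<beta> + q/2))\<^sup>m\<close> of \<open>T\<^sub>m\<close> times
  \<open>E[exp (- a (y - U)); U \<le> y] \<le> 2K/a\<close>, which follows from the Lipschitz bound on F.
  Hence \<open>J\<^sup>p - J\<^sup>c \<le> C (1 + 1/x) (c - p)\<close>, and the remaining terms of the claimed bound are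
  nonnegative.
\<close>

lemma nn_integral_le_add:
  assumes g: "g \<in> borel_measurable N" and le: "AE x in N. f x \<le> h x + g x"
  shows "integral\<^sup>N N f \<le> integral\<^sup>N N h + integral\<^sup>N N g"
proof -
  have "integral\<^sup>N N f \<le> integral\<^sup>N N (\<lambda>x. h x + g x)"
    by (rule nn_integral_mono_AE) (use le in auto)
  also have "\<dots> \<le> integral\<^sup>N N h + integral\<^sup>N N g"
    unfolding nn_integral_def[of N "\<lambda>x. h x + g x"]
  proof (rule SUP_least)
    fix s assume "s \<in> {s. simple_function N s \<and> s \<le> (\<lambda>x. h x + g x)}"
    then have sf: "simple_function N s" and sle: "\<And>x. s x \<le> h x + g x" by (auto simp: le_fun_def)
    \<comment> \<open>\<open>h\<close> need not be measurable, so split \<open>s\<close> as the measurable \<open>s - g\<close> plus \<open>g\<close>.\<close>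
    define d where "d x = (if g x = \<top> then 0 else s x - g x)" for x
    have dm: "d \<in> borel_measurable N"
      unfolding d_def using borel_measurable_simple_function[OF sf] g by measurable
    have "integral\<^sup>S N s = integral\<^sup>N N s" using nn_integral_eq_simple_integral[OF sf] by simp
    also have "\<dots> \<le> integral\<^sup>N N (\<lambda>x. d x + g x)"
      by (rule nn_integral_mono) (auto simp: d_def, metis diff_add_self_ennreal linear order_refl add.commute le_iff_add)
    also have "\<dots> = integral\<^sup>N N d + integral\<^sup>N N g"
      by (rule nn_integral_add) (use dm g in auto)
    also have "\<dots> \<le> integral\<^sup>N N h + integral\<^sup>N N g"
    proof (rule add_right_mono, rule nn_integral_mono)
      fix x show "d x \<le> h x" using sle[of x]
        by (auto simp add: d_def ennreal_minus_le_iff add.commute)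
    qed
    finally show "integral\<^sup>S N s \<le> integral\<^sup>N N h + integral\<^sup>N N g" .
  qed
  finally show ?thesis .
qed

lemma enn2real_le_add:
  assumes "a \<le> b + ennreal r" "b < \<top>" "0 \<le> r"
  shows "enn2real a \<le> enn2real b + r"
proof -
  obtain b' where b: "b = ennreal b'" "0 \<le> b'" using assms(2) by (cases b) auto
  then have "a \<le> ennreal (b' + r)" using assms by (simp add: ennreal_plus)
  then show ?thesis using b assms(3) by (simp add: enn2real_leI)
qed

lemma ennreal_le_suminf: "(f n :: ennreal) \<le> (\<Sum>n. f n)"
  using sum_le_suminf[OF summableI, of "{n}" f] by simp

lemma nn_integral_exp_tail:
  assumes "0 < a" "0 \<le> c"
  shows "(\<integral>\<^sup>+ s. ennreal (exp (- a * s) * c) * indicator {r..} s \<partial>lborel) = ennreal (exp (- a * r) / a * c)"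
proof (rule nn_integral_has_integral_lebesgue')
  show "((\<lambda>s. exp (- a * s) * c) has_integral exp (- a * r) / a * c) {r..}"
    by (intro has_integral_mult_left has_integral_exp_minus_to_infinity assms(1))
qed (use assms in auto)

lemma sums_geometric_tail:
  fixes \<rho> :: real
  assumes "0 \<le> \<rho>" "\<rho> < 1"
  shows "(\<lambda>m. if m = 0 then a else b * \<rho> ^ m) sums (a + b * (\<rho> / (1 - \<rho>)))"
proof -
  define f where "f m = (if m = 0 then a else b * \<rho> ^ m)" for m
  have "(\<lambda>m. b * \<rho> * \<rho> ^ m) sums (b * \<rho> * (1 / (1 - \<rho>)))"
    using assms by (intro sums_mult geometric_sums) simp
  then have "(\<lambda>m. f (Suc m)) sums (b * (\<rho> / (1 - \<rho>)))" by (simp add: f_def mult.assoc)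
  then have "f sums (b * (\<rho> / (1 - \<rho>)) + f 0)" by (simp only: sums_Suc_iff)
  then show ?thesis unfolding f_def by (simp add: add.commute)
qed

lemma exp_neg_le_inverse:
  assumes "0 < (y::real)"
  shows "exp (- y) \<le> 1 / y"
proof -
  have "y \<le> exp y" using exp_ge_add_one_self[of y] by linarith
  then show ?thesis using assms by (simp add: exp_minus field_simps)
qed

lemma (in prob_space) indep_var_nn_integral_mult_le:
  fixes a :: "'b \<Rightarrow> ennreal" and b :: "'b \<times> 'b \<Rightarrow> ennreal"
  assumes ind: "indep_var N Y N' Z" and [measurable]: "a \<in> borel_measurable N"
    and [measurable]: "b \<in> borel_measurable (N \<Otimes>\<^sub>M N')"
    and bound: "\<And>y. y \<in> space N \<Longrightarrow> (\<integral>\<^sup>+\<omega>. b (y, Z \<omega>) \<partial>M) \<le> B"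
  shows "(\<integral>\<^sup>+\<omega>. a (Y \<omega>) * b (Y \<omega>, Z \<omega>) \<partial>M) \<le> B * (\<integral>\<^sup>+\<omega>. a (Y \<omega>) \<partial>M)"
proof -
  have [measurable]: "Y \<in> measurable M N" "Z \<in> measurable M N'"
    using indep_var_rv1[OF ind] indep_var_rv2[OF ind] .
  interpret Z: prob_space "distr M N' Z" by (rule prob_space_distr) simp
  have "(\<integral>\<^sup>+\<omega>. a (Y \<omega>) * b (Y \<omega>, Z \<omega>) \<partial>M) =
        (\<integral>\<^sup>+w. a (fst w) * b w \<partial>distr M (N \<Otimes>\<^sub>M N') (\<lambda>\<omega>. (Y \<omega>, Z \<omega>)))"
    by (subst nn_integral_distr) auto
  also have "\<dots> = (\<integral>\<^sup>+w. a (fst w) * b w \<partial>(distr M N Y \<Otimes>\<^sub>M distr M N' Z))"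
    using ind by (simp add: indep_var_distribution_eq)
  also have "\<dots> = (\<integral>\<^sup>+ y. \<integral>\<^sup>+ z. a y * b (y, z) \<partial>distr M N' Z \<partial>distr M N Y)"
    by (subst Z.nn_integral_fst[symmetric]) (auto simp: measurable_distr_eq1 measurable_distr_eq2)
  also have "\<dots> \<le> (\<integral>\<^sup>+ y. a y * B \<partial>distr M N Y)"
  proof (rule nn_integral_mono)
    fix y assume "y \<in> space (distr M N Y)"
    then have y: "y \<in> space N" by simp
    have [measurable]: "(\<lambda>z. b (y, z)) \<in> borel_measurable N'" by (simp add: y)
    have "(\<integral>\<^sup>+ z. a y * b (y, z) \<partial>distr M N' Z) = a y * (\<integral>\<^sup>+ \<omega>. b (y, Z \<omega>) \<partial>M)"
      by (simp add: nn_integral_cmult nn_integral_distr)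
    also have "\<dots> \<le> a y * B" by (intro mult_left_mono bound y) simp
    finally show "(\<integral>\<^sup>+ z. a y * b (y, z) \<partial>distr M N' Z) \<le> a y * B" .
  qed
  also have "\<dots> = B * (\<integral>\<^sup>+\<omega>. a (Y \<omega>) \<partial>M)"
    by (subst nn_integral_multc) (auto simp: mult.commute nn_integral_distr)
  finally show ?thesis .
qed

lemma (in prob_space) nn_integral_exp_window_le:
  assumes [measurable]: "V \<in> borel_measurable M" and a: "0 < a" and K: "0 \<le> K"
    and lip: "\<And>y1 y2. y1 < y2 \<Longrightarrow> prob {\<omega> \<in> space M. y1 < V \<omega> \<and> V \<omega> \<le> y2} \<le> K * (y2 - y1)"
  shows "(\<integral>\<^sup>+\<omega>. ennreal (if V \<omega> \<le> y then exp (- a * (y - V \<omega>)) else 0) \<partial>M) \<le> ennreal (2 * K / a)"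
proof -
  \<comment> \<open>Cover \<open>(-\<infinity>, y]\<close> by the windows \<open>I k\<close> of length \<open>1/a\<close>, on which the integrand is at most \<open>exp (- k)\<close>.\<close>
  define I where "I k = {u. y - (real k + 1) / a < u \<and> u \<le> y - real k / a}" for k :: nat
  have [measurable]: "I k \<in> sets borel" for k unfolding I_def by measurable
  have geom: "exp (- real k) = exp (- 1) ^ k" for k by (simp add: exp_of_nat_mult[symmetric])
  have sums: "(\<lambda>k. exp (- real k) * (K / a)) sums ((K / a) / (1 - exp (- 1)))"
    using sums_mult2[OF geometric_sums, of "exp (- 1)" "K / a"] by (simp add: geom field_simps)
  have pointwise: "ennreal (if u \<le> y then exp (- a * (y - u)) else 0)
      \<le> (\<Sum>k. ennreal (exp (- real k)) * indicator (I k) u)" for u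
  proof (cases "u \<le> y")
    case True
    define k where "k = nat \<lfloor>a * (y - u)\<rfloor>"
    have "0 \<le> a * (y - u)" using True a by simp
    then have k: "real k \<le> a * (y - u)" "a * (y - u) < real k + 1" by (simp_all add: k_def)
    then have "u \<in> I k" using a by (simp add: I_def field_simps)
    have "ennreal (if u \<le> y then exp (- a * (y - u)) else 0) \<le> ennreal (exp (- real k)) * indicator (I k) u"
      using True k \<open>u \<in> I k\<close> by (simp add: ennreal_leI)
    also have "\<dots> \<le> (\<Sum>k. ennreal (exp (- real k)) * indicator (I k) u)"
      by (rule ennreal_le_suminf)
    finally show ?thesis .
  qed simp
  have window: "(\<integral>\<^sup>+\<omega>. ennreal (exp (- real k)) * indicator (I k) (V \<omega>) \<partial>M) \<le> ennreal (exp (- real k) * (K / a))" for k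
  proof -
    have "(\<integral>\<^sup>+\<omega>. ennreal (exp (- real k)) * indicator (I k) (V \<omega>) \<partial>M) =
          ennreal (exp (- real k)) * emeasure M {\<omega> \<in> space M. V \<omega> \<in> I k}"
      by (subst nn_integral_cmult_indicator[symmetric]) (auto intro!: nn_integral_cong simp: indicator_def)
    also have "\<dots> \<le> ennreal (exp (- real k)) * ennreal (K * ((y - real k / a) - (y - (real k + 1) / a)))"
      using a lip[of "y - (real k + 1) / a" "y - real k / a"]
      by (intro mult_left_mono) (auto simp: I_def emeasure_eq_measure field_simps intro!: ennreal_leI)
    also have "\<dots> = ennreal (exp (- real k) * (K / a))"
      using a K by (simp add: ennreal_mult[symmetric] field_simps)
    finally show ?thesis .
  qed
  have "(\<integral>\<^sup>+\<omega>. ennreal (if V \<omega> \<le> y then exp (- a * (y - V \<omega>)) else 0) \<partial>M)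
        \<le> (\<Sum>k. \<integral>\<^sup>+\<omega>. ennreal (exp (- real k)) * indicator (I k) (V \<omega>) \<partial>M)"
    by (subst nn_integral_suminf[symmetric]) (auto intro!: nn_integral_mono pointwise)
  also have "\<dots> \<le> (\<Sum>k. ennreal (exp (- real k) * (K / a)))"
    by (intro suminf_le window) simp_all
  also have "\<dots> = ennreal ((K / a) / (1 - exp (- 1)))"
    using a K sums by (subst suminf_ennreal2) (auto simp: sums_iff)
  also have "\<dots> \<le> ennreal (2 * K / a)"
  proof (rule ennreal_leI)
    have "2 \<le> exp (1::real)" using exp_ge_add_one_self[of 1] by simp
    then have "1 / (1 - exp (- 1::real)) \<le> 2" by (simp add: exp_minus field_simps)
    then show "(K / a) / (1 - exp (- 1)) \<le> 2 * K / a"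
      using a K mult_left_mono[of "1 / (1 - exp (- 1))" 2 "K / a"] by (simp add: field_simps)
  qed
  finally show ?thesis .
qed

lemma arrival_time_claim_count_le:
  assumes E: "\<And>i. 0 \<le> E i \<omega>" and "0 \<le> t"
  shows "(\<Sum>i<claim_count E t \<omega>. E i \<omega>) \<le> t"
proof (cases "claim_count E t \<omega> = 0")
  case False
  define A where "A = {n::nat. 1 \<le> n \<and> (\<Sum>i<n. E i \<omega>) \<le> t}"
  have card: "claim_count E t \<omega> = card A" by (simp add: claim_count_def A_def)
  with False have fin: "finite A" and "A \<noteq> {}" by (auto intro: card_ge_0_finite)
  define N where "N = Max A"
  with fin \<open>A \<noteq> {}\<close> have max: "N \<in> A" by simp
  \<comment> \<open>The arrival times are nondecreasing, so \<open>A\<close> is an initial segment.\<close>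
  have "A = {1..N}"
  proof
    show "A \<subseteq> {1..N}" using fin by (auto simp: A_def N_def)
    show "{1..N} \<subseteq> A"
    proof
      fix k assume k: "k \<in> {1..N}"
      have "(\<Sum>i<k. E i \<omega>) \<le> (\<Sum>i<N. E i \<omega>)"
        by (rule sum_mono2) (use k E in auto)
      with max k show "k \<in> A" by (auto simp: A_def)
    qed
  qed
  then have "card A = N" by simp
  with max card show ?thesis by (simp add: A_def)
qed (simp add: assms)

lemma ruin_time_nonneg: "0 \<le> ruin_time p E U y c \<omega>"
  unfolding ruin_time_def by (rule Inf_greatest) auto

lemma ruin_time_le:
  "0 \<le> t \<Longrightarrow> surplus p E U y c \<omega> t < 0 \<Longrightarrow> ruin_time p E U y c \<omega> \<le> ereal t"
  unfolding ruin_time_def by (rule Inf_lower) auto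

lemma ruin_time_antimono:
  assumes "c' \<le> c" shows "ruin_time p E U y c \<omega> \<le> ruin_time p E U y c' \<omega>"
  unfolding ruin_time_def
proof (rule Inf_superset_mono, safe)
  fix t assume t: "0 \<le> t" "surplus p E U y c' \<omega> t < 0"
  have "surplus p E U y c \<omega> t \<le> surplus p E U y c' \<omega> t"
    using assms t(1) by (simp add: surplus_def mult_right_mono)
  with t show "\<exists>t'. ereal t = ereal t' \<and> 0 \<le> t' \<and> surplus p E U y c \<omega> t' < 0" by auto
qed

definition early_ruin_term ::
  "real \<Rightarrow> real \<Rightarrow> real \<Rightarrow> (nat \<Rightarrow> 'a \<Rightarrow> real) \<Rightarrow> (nat \<Rightarrow> 'a \<Rightarrow> real) \<Rightarrow> nat \<Rightarrow> 'a \<Rightarrow> real" where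
  "early_ruin_term q d x E U m \<omega> = exp (- q * (\<Sum>i<m. E i \<omega>) / 2) *
      (if (\<Sum>i<m. U i \<omega>) \<le> x then exp (- q * (x - (\<Sum>i<m. U i \<omega>)) / (2 * d)) else 0)"

definition early_ruin_majorant ::
  "real \<Rightarrow> real \<Rightarrow> real \<Rightarrow> (nat \<Rightarrow> 'a \<Rightarrow> real) \<Rightarrow> (nat \<Rightarrow> 'a \<Rightarrow> real) \<Rightarrow> 'a \<Rightarrow> ennreal" where
  "early_ruin_majorant q d x E U \<omega> = (\<Sum>m. ennreal (early_ruin_term q d x E U m \<omega>))"

lemma exp_le_early_ruin_majorant:
  assumes E: "\<And>i. 0 \<le> E i \<omega>" and pc: "p < c" and q: "0 < q"
    and t: "0 \<le> t" "surplus p E U x c \<omega> t < 0" "ereal t < ruin_time p E U x p \<omega>"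
  shows "ennreal (exp (- q * t)) \<le> early_ruin_majorant q (c - p) x E U \<omega>"
proof -
  define m where "m = claim_count E t \<omega>"
  define T where "T = (\<Sum>i<m. E i \<omega>)"
  define S where "S = (\<Sum>i<m. U i \<omega>)"
  have "T \<le> t" using arrival_time_claim_count_le[of E \<omega> t] E t(1) by (simp add: T_def m_def)
  have "\<not> surplus p E U x p \<omega> t < 0"
    using ruin_time_le[OF t(1), of p E U x p \<omega>] t(3) by auto
  then have "S \<le> x" by (simp add: surplus_def S_def m_def)
  have "x - S < (c - p) * t" using t(2) by (simp add: surplus_def S_def m_def algebra_simps)
  then have "q / 2 * ((x - S) / (c - p)) \<le> q / 2 * t"
    using pc q by (intro mult_left_mono) (auto simp: divide_le_eq mult.commute)
  moreover have "q * (x - S) / (2 * (c - p)) = q / 2 * ((x - S) / (c - p))" by simp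
  moreover have "q * T / 2 \<le> q * t / 2" using \<open>T \<le> t\<close> q by simp
  ultimately have "- q * t \<le> - q * T / 2 + - q * (x - S) / (2 * (c - p))" by linarith
  then have "exp (- q * t) \<le> exp (- q * T / 2) * exp (- q * (x - S) / (2 * (c - p)))"
    by (simp add: exp_add[symmetric])
  with \<open>S \<le> x\<close> have "ennreal (exp (- q * t)) \<le>
      ennreal (exp (- q * T / 2) * (if S \<le> x then exp (- q * (x - S) / (2 * (c - p))) else 0))"
    by (simp add: ennreal_leI)
  also have "\<dots> \<le> early_ruin_majorant q (c - p) x E U \<omega>"
    unfolding early_ruin_majorant_def early_ruin_term_def T_def S_def by (rule ennreal_le_suminf)
  finally show ?thesis .
qed

lemma exp_ruin_time_le_early_ruin_majorant:
  assumes E: "\<And>i. 0 \<le> E i \<omega>" and pc: "p < c" and q: "0 < q"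
    and early: "ruin_time p E U x c \<omega> < ruin_time p E U x p \<omega>"
  shows "ennreal (exp (- q * real_of_ereal (ruin_time p E U x c \<omega>))) \<le> early_ruin_majorant q (c - p) x E U \<omega>"
proof (rule ccontr)
  let ?G = "early_ruin_majorant q (c - p) x E U \<omega>"
  obtain r where r: "ruin_time p E U x c \<omega> = ereal r"
    using early ruin_time_nonneg[of p E U x c \<omega>] by (cases "ruin_time p E U x c \<omega>") auto
  assume "\<not> ?thesis"
  with r have less: "?G < ennreal (exp (- q * r))" by simp
  \<comment> \<open>\<open>\<tau>\<^sub>c\<close> is only an infimum, so argue at times of c-ruin slightly after it.\<close>
  have "((\<lambda>t. ennreal (exp (- q * t))) \<longlongrightarrow> ennreal (exp (- q * r))) (at_right r)"
    by (intro tendsto_intros)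
  from order_tendstoD(1)[OF this less]
  have "\<forall>\<^sub>F t in at_right r. ?G < ennreal (exp (- q * t)) \<and> ereal t < ruin_time p E U x p \<omega>"
    using order_tendstoD(2)[OF iffD2[OF lim_ereal tendsto_ident_at], of r _ "{r<..}"] early r
    by (simp add: eventually_conj_iff)
  then obtain b where "r < b"
    and b: "\<And>t. r < t \<Longrightarrow> t < b \<Longrightarrow> ?G < ennreal (exp (- q * t)) \<and> ereal t < ruin_time p E U x p \<omega>"
    by (auto simp: eventually_at_right_field)
  have "ruin_time p E U x c \<omega> < ereal b" using r \<open>r < b\<close> by simp
  then obtain t where t: "0 \<le> t" "surplus p E U x c \<omega> t < 0" "t < b"
    unfolding ruin_time_def by (auto simp: Inf_less_iff)
  have "r \<le> t" using ruin_time_le[OF t(1,2)] r by simp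
  then have "?G < ennreal (exp (- q * t)) \<and> ereal t < ruin_time p E U x p \<omega>"
    using b[of t] t(3) less early r by (cases "t = r") auto
  with exp_le_early_ruin_majorant[OF E pc q t(1,2)] show False by auto
qed

definition discounted_dividends ::
  "real \<Rightarrow> real \<Rightarrow> (nat \<Rightarrow> 'a \<Rightarrow> real) \<Rightarrow> (nat \<Rightarrow> 'a \<Rightarrow> real) \<Rightarrow> real \<Rightarrow> real \<Rightarrow> 'a \<Rightarrow> ennreal" where
  "discounted_dividends p q E U x c \<omega> = (\<integral>\<^sup>+ s. ennreal (exp (- q * s) * c) *
      indicator {t. 0 \<le> t \<and> ereal t < ruin_time p E U x c \<omega>} s \<partial>lborel)"

lemma J_const_eq: "J_const M p q E U c x = enn2real (\<integral>\<^sup>+\<omega>. discounted_dividends p q E U x c \<omega> \<partial>M)"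
  by (simp add: J_const_def discounted_dividends_def)

lemma discounted_dividends_le:
  assumes "0 < q" "0 \<le> c"
  shows "discounted_dividends p q E U x c \<omega> \<le> ennreal (c / q)"
proof -
  have "discounted_dividends p q E U x c \<omega> \<le> (\<integral>\<^sup>+ s. ennreal (exp (- q * s) * c) * indicator {0..} s \<partial>lborel)"
    unfolding discounted_dividends_def by (intro nn_integral_mono) (auto simp: indicator_def)
  also have "\<dots> = ennreal (c / q)" using nn_integral_exp_tail[OF assms, of 0] by simp
  finally show ?thesis .
qed

lemma discounted_dividends_higher_rate_le:
  assumes "0 \<le> p" "p < c" and q: "0 < q"
  shows "discounted_dividends p q E U x c \<omega> \<le> discounted_dividends p q E U x p \<omega> + ennreal ((c - p) / q)"
proof -
  let ?\<tau>c = "ruin_time p E U x c \<omega>" and ?\<tau>p = "ruin_time p E U x p \<omega>"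
  define g where "g s = ennreal (exp (- q * s) * (c - p)) * indicator {0..} s" for s
  have "discounted_dividends p q E U x c \<omega> \<le> discounted_dividends p q E U x p \<omega> + integral\<^sup>N lborel g"
    unfolding discounted_dividends_def
  proof (rule nn_integral_le_add, unfold g_def, measurable, rule AE_I2)
    fix s
    show "ennreal (exp (- q * s) * c) * indicator {t. 0 \<le> t \<and> ereal t < ?\<tau>c} s \<le>
          ennreal (exp (- q * s) * p) * indicator {t. 0 \<le> t \<and> ereal t < ?\<tau>p} s +
          ennreal (exp (- q * s) * (c - p)) * indicator {0..} s"
    proof (cases "0 \<le> s \<and> ereal s < ?\<tau>c")
      case True
      then have "ereal s < ?\<tau>p" using ruin_time_antimono[of p c] assms by (meson less_le_trans less_imp_le)
      moreover have "ennreal (exp (- q * s) * c) = ennreal (exp (- q * s) * p) + ennreal (exp (- q * s) * (c - p))"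
        using assms by (subst ennreal_plus[symmetric]) (auto simp: algebra_simps)
      ultimately show ?thesis using True by simp
    qed auto
  qed
  also have "integral\<^sup>N lborel g = ennreal ((c - p) / q)"
    unfolding g_def using nn_integral_exp_tail[OF q, of "c - p" 0] assms by simp
  finally show ?thesis .
qed

lemma discounted_dividends_lower_rate_le:
  assumes E: "\<And>i. 0 \<le> E i \<omega>" and p: "0 \<le> p" and pc: "p < c" and q: "0 < q"
  shows "discounted_dividends p q E U x p \<omega>
    \<le> discounted_dividends p q E U x c \<omega> + ennreal (p / q) * early_ruin_majorant q (c - p) x E U \<omega>"
proof -
  let ?\<tau>c = "ruin_time p E U x c \<omega>" and ?\<tau>p = "ruin_time p E U x p \<omega>"
  define g where "g s = ennreal (exp (- q * s) * p) * indicator {s. ?\<tau>c \<le> ereal s \<and> ereal s < ?\<tau>p} s" for s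
  have "discounted_dividends p q E U x p \<omega> \<le> discounted_dividends p q E U x c \<omega> + integral\<^sup>N lborel g"
    unfolding discounted_dividends_def
  proof (rule nn_integral_le_add, unfold g_def, measurable, rule AE_I2)
    fix s
    have "ennreal (exp (- q * s) * p) \<le> ennreal (exp (- q * s) * c)"
      using pc by (intro ennreal_leI) simp
    then show "ennreal (exp (- q * s) * p) * indicator {t. 0 \<le> t \<and> ereal t < ?\<tau>p} s \<le>
          ennreal (exp (- q * s) * c) * indicator {t. 0 \<le> t \<and> ereal t < ?\<tau>c} s +
          ennreal (exp (- q * s) * p) * indicator {s. ?\<tau>c \<le> ereal s \<and> ereal s < ?\<tau>p} s"
      by (auto simp: indicator_def not_less add_increasing2)
  qed
  also have "integral\<^sup>N lborel g \<le> ennreal (p / q) * early_ruin_majorant q (c - p) x E U \<omega>"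
  proof (cases "?\<tau>c < ?\<tau>p")
    case early: True
    obtain r where r: "?\<tau>c = ereal r"
      using early ruin_time_nonneg[of p E U x c \<omega>] by (cases ?\<tau>c) auto
    have "integral\<^sup>N lborel g \<le> (\<integral>\<^sup>+ s. ennreal (exp (- q * s) * p) * indicator {r..} s \<partial>lborel)"
      by (intro nn_integral_mono) (auto simp: g_def r indicator_def)
    also have "\<dots> = ennreal (p / q) * ennreal (exp (- q * real_of_ereal ?\<tau>c))"
      using nn_integral_exp_tail[OF q p, of r] p q by (simp add: r ennreal_mult'[symmetric])
    also have "\<dots> \<le> ennreal (p / q) * early_ruin_majorant q (c - p) x E U \<omega>"
      by (intro mult_left_mono exp_ruin_time_le_early_ruin_majorant[OF E pc q early]) simp
    finally show ?thesis .
  next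
    case False
    then have "g = (\<lambda>s. 0)" unfolding g_def by (auto simp: fun_eq_iff indicator_def)
    then show ?thesis by simp
  qed
  finally show ?thesis by (simp add: add_left_mono)
qed

locale cramer_lundberg =
  fixes M :: "'a measure" and p \<beta> :: real and F :: "real \<Rightarrow> real"
    and E U :: "nat \<Rightarrow> 'a \<Rightarrow> real" and K :: real
  assumes model: "cl_model M p \<beta> F E U"
    and lipschitz: "\<And>x y. x < y \<Longrightarrow> 0 \<le> F y - F x \<and> F y - F x \<le> K * (y - x)"
begin

sublocale prob_space M using model by (simp add: cl_model_def)

definition interarrival_or_claim :: "nat + nat \<Rightarrow> 'a \<Rightarrow> real" where
  "interarrival_or_claim k = (case k of Inl i \<Rightarrow> E i | Inr i \<Rightarrow> U i)"

lemma p_pos: "0 < p" and beta_pos: "0 < \<beta>"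
  using model by (auto simp: cl_model_def)

lemma K_nonneg: "0 \<le> K"
  using lipschitz[of 0 1] by simp

lemma indep_interarrival_or_claim: "indep_vars (\<lambda>_. borel) interarrival_or_claim UNIV"
  using model by (simp add: cl_model_def interarrival_or_claim_def[abs_def])

lemma interarrival_or_claim_measurable[measurable]: "interarrival_or_claim k \<in> borel_measurable M"
  using indep_interarrival_or_claim by (auto simp: indep_vars_def)

lemma E_measurable[measurable]: "E i \<in> borel_measurable M"
  and U_measurable[measurable]: "U i \<in> borel_measurable M"
  using interarrival_or_claim_measurable[of "Inl i"] interarrival_or_claim_measurable[of "Inr i"]
  by (simp_all add: interarrival_or_claim_def)

lemma distributed_E: "distributed M lborel (E i) (\<lambda>x. ennreal (exponential_density \<beta> x))"
  using model by (simp add: cl_model_def)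

lemma AE_E_nonneg: "AE \<omega> in M. \<forall>i. 0 \<le> E i \<omega>"
proof (subst AE_all_countable, intro allI)
  fix i
  have "(AE \<omega> in M. 0 \<le> E i \<omega>) \<longleftrightarrow> (AE x in lborel. 0 < ennreal (exponential_density \<beta> x) \<longrightarrow> 0 \<le> x)"
    by (rule distributed_AE2[OF distributed_E]) measurable
  then show "AE \<omega> in M. 0 \<le> E i \<omega>" by (simp add: exponential_density_def)
qed

lemma laplace_interarrival:
  assumes a: "0 < a"
  shows "(\<integral>\<^sup>+ \<omega>. ennreal (exp (- a * E i \<omega>)) \<partial>M) = ennreal (\<beta> / (\<beta> + a))"
proof -
  have "(\<integral>\<^sup>+ \<omega>. ennreal (exp (- a * E i \<omega>)) \<partial>M) =
        (\<integral>\<^sup>+ x. ennreal (exponential_density \<beta> x) * ennreal (exp (- a * x)) \<partial>lborel)"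
    by (rule distributed_nn_integral[OF distributed_E, symmetric]) measurable
  also have "\<dots> = (\<integral>\<^sup>+ x. ennreal (exp (- (\<beta> + a) * x) * \<beta>) * indicator {0..} x \<partial>lborel)"
    using beta_pos by (intro nn_integral_cong)
      (auto simp: exponential_density_def indicator_def ennreal_mult[symmetric] exp_add[symmetric] algebra_simps)
  also have "\<dots> = ennreal (\<beta> / (\<beta> + a))"
    using nn_integral_exp_tail[of "\<beta> + a" \<beta> 0] a beta_pos by simp
  finally show ?thesis .
qed

lemma laplace_arrival_time:
  assumes a: "0 < a"
  shows "(\<integral>\<^sup>+ \<omega>. ennreal (exp (- a * (\<Sum>i<n. E i \<omega>))) \<partial>M) = ennreal ((\<beta> / (\<beta> + a)) ^ n)"
proof -
  define Y where "Y k \<omega> = ennreal (exp (- a * interarrival_or_claim k \<omega>))" for k \<omega>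
  have "indep_vars (\<lambda>_. borel) Y (Inl ` {..<n})"
    unfolding Y_def by (rule indep_vars_compose2[OF indep_vars_subset[OF indep_interarrival_or_claim]]) auto
  have "(\<integral>\<^sup>+ \<omega>. ennreal (exp (- a * (\<Sum>i<n. E i \<omega>))) \<partial>M) = (\<integral>\<^sup>+ \<omega>. (\<Prod>k\<in>Inl ` {..<n}. Y k \<omega>) \<partial>M)"
    by (intro nn_integral_cong) (simp add: prod.reindex sum.reindex Y_def interarrival_or_claim_def
        prod_ennreal exp_sum[symmetric] sum_distrib_left sum_negf)
  also have "\<dots> = (\<Prod>k\<in>Inl ` {..<n}. \<integral>\<^sup>+ \<omega>. Y k \<omega> \<partial>M)"
    by (rule indep_vars_nn_integral) (use \<open>indep_vars (\<lambda>_. borel) Y (Inl ` {..<n})\<close> in auto)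
  also have "\<dots> = (\<Prod>i<n. ennreal (\<beta> / (\<beta> + a)))"
    using laplace_interarrival[OF a] by (simp add: prod.reindex Y_def interarrival_or_claim_def)
  also have "\<dots> = ennreal ((\<beta> / (\<beta> + a)) ^ n)"
    using a beta_pos by (simp add: ennreal_power)
  finally show ?thesis .
qed

lemma prob_claim_le: "prob {\<omega> \<in> space M. U i \<omega> \<le> y} = F y"
  using model by (simp add: cl_model_def)

lemma claim_interval_prob_le:
  assumes "y1 < y2"
  shows "prob {\<omega> \<in> space M. y1 < U i \<omega> \<and> U i \<omega> \<le> y2} \<le> K * (y2 - y1)"
proof -
  have "{\<omega> \<in> space M. y1 < U i \<omega> \<and> U i \<omega> \<le> y2} = {\<omega> \<in> space M. U i \<omega> \<le> y2} - {\<omega> \<in> space M. U i \<omega> \<le> y1}"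
    by auto
  then have "prob {\<omega> \<in> space M. y1 < U i \<omega> \<and> U i \<omega> \<le> y2} = F y2 - F y1"
    using assms by (simp add: finite_measure_Diff prob_claim_le subset_eq)
  then show ?thesis using lipschitz[OF assms] by simp
qed

lemma early_ruin_majorant_term_le:
  assumes q: "0 < q" and d: "0 < d"
  shows "(\<integral>\<^sup>+\<omega>. ennreal (early_ruin_term q d x E U (Suc m) \<omega>) \<partial>M)
    \<le> ennreal (4 * K * d / q) * ennreal ((\<beta> / (\<beta> + q / 2)) ^ Suc m)"
proof -
  \<comment> \<open>The last claim \<open>U m\<close> is independent of the first \<open>m + 1\<close> inter-arrival times and earlier claims.\<close>
  define A where "A = Inl ` {..<Suc m} \<union> Inr ` {..<m}"
  define N :: "(nat + nat \<Rightarrow> real) measure" where "N = PiM A (\<lambda>_. borel)"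
  define N' :: "(nat + nat \<Rightarrow> real) measure" where "N' = PiM {Inr m} (\<lambda>_. borel)"
  define Y where "Y \<omega> = restrict (\<lambda>k. interarrival_or_claim k \<omega>) A" for \<omega>
  define Z where "Z \<omega> = restrict (\<lambda>k. interarrival_or_claim k \<omega>) {Inr m}" for \<omega>
  have ind: "indep_var N Y N' Z"
    unfolding N_def N'_def Y_def Z_def
    by (rule indep_var_restrict[OF indep_interarrival_or_claim]) (auto simp: A_def)
  have [measurable]: "(\<lambda>v. v k) \<in> borel_measurable N" if "k \<in> A" for k
    unfolding N_def using that by (rule measurable_component_singleton)
  have [measurable]: "(\<lambda>v. v (Inr m)) \<in> borel_measurable N'"
    unfolding N'_def by (rule measurable_component_singleton) simp
  have [measurable]: "Inl i \<in> A" if "i < Suc m" for i using that by (simp add: A_def)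
  have [measurable]: "Inr i \<in> A" if "i < m" for i using that by (simp add: A_def)
  define a where "a v = ennreal (exp (- q * (\<Sum>i<Suc m. v (Inl i)) / 2))" for v :: "nat + nat \<Rightarrow> real"
  define b where "b w = ennreal (if (\<Sum>i<m. fst w (Inr i)) + snd w (Inr m) \<le> x
      then exp (- q * (x - ((\<Sum>i<m. fst w (Inr i)) + snd w (Inr m))) / (2 * d)) else 0)"
    for w :: "(nat + nat \<Rightarrow> real) \<times> (nat + nat \<Rightarrow> real)"
  have "(\<integral>\<^sup>+\<omega>. a (Y \<omega>) * b (Y \<omega>, Z \<omega>) \<partial>M) \<le> ennreal (4 * K * d / q) * (\<integral>\<^sup>+\<omega>. a (Y \<omega>) \<partial>M)"
  proof (rule indep_var_nn_integral_mult_le[OF ind])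
    show "a \<in> borel_measurable N" unfolding a_def by measurable
    show "b \<in> borel_measurable (N \<Otimes>\<^sub>M N')" unfolding b_def by measurable
    fix v :: "nat + nat \<Rightarrow> real"
    define s where "s = (\<Sum>i<m. v (Inr i))"
    have "(\<integral>\<^sup>+\<omega>. b (v, Z \<omega>) \<partial>M) =
        (\<integral>\<^sup>+\<omega>. ennreal (if U m \<omega> \<le> x - s then exp (- (q / (2 * d)) * ((x - s) - U m \<omega>)) else 0) \<partial>M)"
      by (intro nn_integral_cong) (auto simp: b_def Z_def interarrival_or_claim_def s_def algebra_simps
          add_divide_distrib[symmetric] diff_divide_distrib[symmetric])
    also have "\<dots> \<le> ennreal (2 * K / (q / (2 * d)))"
      using q d K_nonneg claim_interval_prob_le by (intro nn_integral_exp_window_le) auto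
    finally show "(\<integral>\<^sup>+\<omega>. b (v, Z \<omega>) \<partial>M) \<le> ennreal (4 * K * d / q)" by (simp add: mult.assoc)
  qed
  also have "(\<integral>\<^sup>+\<omega>. a (Y \<omega>) \<partial>M) = ennreal ((\<beta> / (\<beta> + q / 2)) ^ Suc m)"
    using laplace_arrival_time[of "q / 2" "Suc m"] q
    by (simp add: a_def Y_def interarrival_or_claim_def A_def)
  also have "(\<integral>\<^sup>+\<omega>. a (Y \<omega>) * b (Y \<omega>, Z \<omega>) \<partial>M) = (\<integral>\<^sup>+\<omega>. ennreal (early_ruin_term q d x E U (Suc m) \<omega>) \<partial>M)"
    by (intro nn_integral_cong)
       (auto simp: early_ruin_term_def a_def b_def Y_def Z_def interarrival_or_claim_def A_def ennreal_mult[symmetric])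
  finally show ?thesis .
qed

lemma early_ruin_term_measurable[measurable]: "early_ruin_term q d x E U m \<in> borel_measurable M"
  unfolding early_ruin_term_def by measurable

lemma early_ruin_majorant_expectation_le:
  assumes q: "0 < q" and d: "0 < d" and x: "0 < x"
  shows "(\<integral>\<^sup>+\<omega>. early_ruin_majorant q d x E U \<omega> \<partial>M) \<le> ennreal (2 * d / (q * x) + 8 * \<beta> * K * d / q\<^sup>2)"
proof -
  define \<rho> where "\<rho> = \<beta> / (\<beta> + q / 2)"
  have \<rho>: "0 \<le> \<rho>" "\<rho> < 1" using beta_pos q by (auto simp: \<rho>_def)
  define h where "h m = (if m = 0 then 2 * d / (q * x) else 4 * K * d / q * \<rho> ^ m)" for m
  have "0 < 2 * \<beta> + q" using beta_pos q by simp
  then have "\<rho> = 2 * \<beta> / (2 * \<beta> + q)" "1 - \<rho> = q / (2 * \<beta> + q)"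
    by (simp_all add: \<rho>_def field_simps)
  then have "\<rho> / (1 - \<rho>) = 2 * \<beta> / q" using \<open>0 < 2 * \<beta> + q\<close> q by simp
  then have h: "h sums (2 * d / (q * x) + 8 * \<beta> * K * d / q\<^sup>2)"
    using sums_geometric_tail[OF \<rho>, of "2 * d / (q * x)" "4 * K * d / q"]
    unfolding h_def by (simp add: power2_eq_square mult_ac)
  have "(\<integral>\<^sup>+\<omega>. early_ruin_majorant q d x E U \<omega> \<partial>M) = (\<Sum>m. \<integral>\<^sup>+\<omega>. ennreal (early_ruin_term q d x E U m \<omega>) \<partial>M)"
    unfolding early_ruin_majorant_def by (rule nn_integral_suminf) measurable
  also have "\<dots> \<le> (\<Sum>m. ennreal (h m))"
  proof (intro suminf_le allI)
    fix m show "(\<integral>\<^sup>+\<omega>. ennreal (early_ruin_term q d x E U m \<omega>) \<partial>M) \<le> ennreal (h m)"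
    proof (cases m)
      case 0
      have "exp (- (q * x / (2 * d))) \<le> 1 / (q * x / (2 * d))"
        using q d x by (intro exp_neg_le_inverse) simp
      then show ?thesis using 0 x by (simp add: early_ruin_term_def h_def emeasure_space_1 ennreal_leI)
    next
      case (Suc k)
      have "ennreal (4 * K * d / q) * ennreal ((\<beta> / (\<beta> + q / 2)) ^ Suc k) = ennreal (h (Suc k))"
        using q d K_nonneg by (subst ennreal_mult'[symmetric]) (simp_all add: h_def \<rho>_def)
      with early_ruin_majorant_term_le[OF q d, of x k] show ?thesis
        unfolding Suc by (rule ord_le_eq_trans)
    qed
  qed simp_all
  also have "\<dots> = ennreal (2 * d / (q * x) + 8 * \<beta> * K * d / q\<^sup>2)"
    using h q d x K_nonneg \<rho> by (subst suminf_ennreal2) (auto simp: h_def sums_iff)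
  finally show ?thesis .
qed

lemma nn_integral_discounted_dividends_finite:
  assumes "0 < q" "0 \<le> c"
  shows "(\<integral>\<^sup>+\<omega>. discounted_dividends p q E U x c \<omega> \<partial>M) < \<top>"
proof -
  have "(\<integral>\<^sup>+\<omega>. discounted_dividends p q E U x c \<omega> \<partial>M) \<le> (\<integral>\<^sup>+\<omega>. ennreal (c / q) \<partial>M)"
    by (intro nn_integral_mono discounted_dividends_le assms)
  then show ?thesis by (simp add: emeasure_space_1 top_unique order_le_less_trans)
qed

lemma J_const_higher_rate_le:
  assumes pc: "p < c" and q: "0 < q"
  shows "J_const M p q E U c x \<le> J_const M p q E U p x + (c - p) / q"
proof -
  have "(\<integral>\<^sup>+\<omega>. discounted_dividends p q E U x c \<omega> \<partial>M)
      \<le> (\<integral>\<^sup>+\<omega>. discounted_dividends p q E U x p \<omega> \<partial>M) + (\<integral>\<^sup>+\<omega>. ennreal ((c - p) / q) \<partial>M)"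
    using p_pos pc q by (intro nn_integral_le_add AE_I2 discounted_dividends_higher_rate_le) auto
  then show ?thesis unfolding J_const_eq
    by (intro enn2real_le_add nn_integral_discounted_dividends_finite)
       (use p_pos pc q in \<open>auto simp: emeasure_space_1\<close>)
qed

lemma J_const_lower_rate_le:
  assumes pc: "p < c" and q: "0 < q" and x: "0 < x"
  shows "J_const M p q E U p x \<le> J_const M p q E U c x + (2 * p / (q\<^sup>2 * x) + 8 * p * \<beta> * K / q ^ 3) * (c - p)"
proof -
  let ?G = "early_ruin_majorant q (c - p) x E U"
  have [measurable]: "?G \<in> borel_measurable M" unfolding early_ruin_majorant_def by measurable
  have "(\<integral>\<^sup>+\<omega>. discounted_dividends p q E U x p \<omega> \<partial>M)
      \<le> (\<integral>\<^sup>+\<omega>. discounted_dividends p q E U x c \<omega> \<partial>M) + (\<integral>\<^sup>+\<omega>. ennreal (p / q) * ?G \<omega> \<partial>M)"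
    using AE_E_nonneg
    by (intro nn_integral_le_add, measurable, eventually_elim)
       (intro discounted_dividends_lower_rate_le, use p_pos pc q in auto)
  also have "(\<integral>\<^sup>+\<omega>. ennreal (p / q) * ?G \<omega> \<partial>M) = ennreal (p / q) * (\<integral>\<^sup>+\<omega>. ?G \<omega> \<partial>M)"
    by (rule nn_integral_cmult) measurable
  also have "\<dots> \<le> ennreal (p / q) * ennreal (2 * (c - p) / (q * x) + 8 * \<beta> * K * (c - p) / q\<^sup>2)"
    using pc q x by (intro mult_left_mono early_ruin_majorant_expectation_le) auto
  also have "\<dots> = ennreal ((p / q) * (2 * (c - p) / (q * x) + 8 * \<beta> * K * (c - p) / q\<^sup>2))"
    by (rule ennreal_mult'[symmetric]) (use p_pos q in simp)
  finally have "J_const M p q E U p x \<le> J_const M p q E U c x +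
      (p / q) * (2 * (c - p) / (q * x) + 8 * \<beta> * K * (c - p) / q\<^sup>2)"
    unfolding J_const_eq by (rule enn2real_le_add)
       (use p_pos pc q x K_nonneg beta_pos in \<open>auto intro: nn_integral_discounted_dividends_finite\<close>)
  also have "(p / q) * (2 * (c - p) / (q * x) + 8 * \<beta> * K * (c - p) / q\<^sup>2) =
      (2 * p / (q\<^sup>2 * x) + 8 * p * \<beta> * K / q ^ 3) * (c - p)"
    using q x by (simp add: field_simps power2_eq_square power3_eq_cube)
  finally show ?thesis .
qed

end

theorem lemma9p6:
  fixes M :: "'a measure" and E U :: "nat \<Rightarrow> 'a \<Rightarrow> real" and F :: "real \<Rightarrow> real"
    and p \<beta> q cbar K :: real
  assumes model: "cl_model M p \<beta> F E U"
    and A1: "\<And>x y. x < y \<Longrightarrow> 0 \<le> F y - F x \<and> F y - F x \<le> K * (y - x)"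
    and cbar: "p < cbar" and q: "0 < q"
  shows "\<exists>Kbar > 0. \<forall>c \<alpha> x. p < c \<and> c \<le> cbar \<and> 0 < \<alpha> \<and> \<alpha> < 1 \<and> 0 < x \<longrightarrow>
           - (c - p) / q \<le> J_const M p q E U p x - J_const M p q E U c x \<and>
           J_const M p q E U p x - J_const M p q E U c x \<le>
             Kbar * (1 + 1 / x
                     + exp (- 1 / (1 - \<alpha>)) / (x * q * (1 - \<alpha>)) powr (1 / (1 - \<alpha>))
                     + x / (c - p) powr (1 - \<alpha>)) * (c - p)"
proof -
  interpret cramer_lundberg M p \<beta> F E U K using model A1 by unfold_locales
  \<comment> \<open>The constant does not depend on \<open>cbar\<close>, which the proof never uses.\<close>
  define Kbar where "Kbar = 2 * p / q\<^sup>2 + 8 * p * \<beta> * K / q ^ 3 + 1"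
  have coeffs: "2 * p / q\<^sup>2 \<le> Kbar" "8 * p * \<beta> * K / q ^ 3 \<le> Kbar" "0 < Kbar"
    using p_pos q beta_pos K_nonneg by (simp_all add: Kbar_def add_pos_nonneg)
  show ?thesis
  proof (intro exI[of _ Kbar] conjI allI impI)
    fix c \<alpha> x :: real
    assume H: "p < c \<and> c \<le> cbar \<and> 0 < \<alpha> \<and> \<alpha> < 1 \<and> 0 < x"
    then show "- (c - p) / q \<le> J_const M p q E U p x - J_const M p q E U c x"
      using J_const_higher_rate_le[OF _ q, of c x] by (auto simp: diff_divide_distrib)
    define e where "e = exp (- 1 / (1 - \<alpha>)) / (x * q * (1 - \<alpha>)) powr (1 / (1 - \<alpha>))"
    define f where "f = x / (c - p) powr (1 - \<alpha>)"
    have "0 \<le> e" "0 \<le> f" using H by (simp_all add: e_def f_def)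
    have "2 * p / (q\<^sup>2 * x) \<le> Kbar * (1 / x)"
      using mult_right_mono[OF coeffs(1), of "1 / x"] H by simp
    then have "2 * p / (q\<^sup>2 * x) + 8 * p * \<beta> * K / q ^ 3 \<le> Kbar * (1 / x) + Kbar * 1 + Kbar * e + Kbar * f"
      using coeffs \<open>0 \<le> e\<close> \<open>0 \<le> f\<close> mult_nonneg_nonneg[of Kbar e] mult_nonneg_nonneg[of Kbar f] by linarith
    also have "\<dots> = Kbar * (1 + 1 / x + e + f)" by (simp add: algebra_simps)
    finally have "(2 * p / (q\<^sup>2 * x) + 8 * p * \<beta> * K / q ^ 3) * (c - p) \<le> Kbar * (1 + 1 / x + e + f) * (c - p)"
      using H by (intro mult_right_mono) auto
    with J_const_lower_rate_le[OF _ q, of c x] H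
    have "J_const M p q E U p x - J_const M p q E U c x \<le> Kbar * (1 + 1 / x + e + f) * (c - p)"
      by (smt (verit))
    then show "J_const M p q E U p x - J_const M p q E U c x \<le> Kbar * (1 + 1 / x
        + exp (- 1 / (1 - \<alpha>)) / (x * q * (1 - \<alpha>)) powr (1 / (1 - \<alpha>)) + x / (c - p) powr (1 - \<alpha>)) * (c - p)"
      by (simp only: e_def f_def)
  qed (use coeffs in simp)
qed

end
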